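(* Let $t=f\,p_1\cdots p_n$ be a linear term, with $f$ a function symbol and $p_1,\dots,p_n$ patterns, whose variables are $x_1,\dots,x_m$, and let $\sigma=\{x_1:=s_1,\dots,x_m:=s_m\}$ be a substitution. If $\emptyset\vdash^{\le}_J t\sigma:\rho$, then there exist a context $\Gamma=x_1:\sigma_1,\dots,x_m:\sigma_m$ and a monotype $\tau$ with $\Gamma\vdash_{FP}t:\tau$, together with an index substitution $\theta$ such that $\tau\theta\sqsubseteq_J\rho$ and $\emptyset\vdash^{\le}_J s_k:\rho_k\theta$ for each $1\le k\le m$, where $\sigma_k=\forall\vec i.\rho_k$.
   Context: Simply typed terms over variables, function symbols $\mathcal F$, constructors $\mathcal C$: variables, symbols, applications $t\,u$, pairs $(t,u)$, and $\mathsf{let}\ (x,y)=t\ \mathsf{in}\ u$. Patterns: $p::=x\mid c\,p_1\cdots p_{\mathrm{ar}(c)}$ with $c$ a constructor of result base type, fully applied. A term is linear if each variable occurs at most once. Index terms $a::=i\mid g(a_1,\dots,a_k)$ over index symbols $g$ (including $0,\mathsf s,+$). An interpretation $J$ maps each $k$-ary $g$ to a total weakly monotone function $\mathbb N^k\to\mathbb N$ ($0,\mathsf s,+$ standard); $a\le_J b$ iff $[a]^\alpha_J\le[b]^\alpha_J$ for all assignments $\alpha$. Sized types: monotypes $\rho::=B^a\mid\rho_1\times\rho_2\mid\sigma\to\rho$; polytypes $\forall\vec i.\,\sigma\to\rho$; types $\sigma::=\rho\mid$ polytype; a monotype is identified with $\forall\cdot.\rho$; types up to $\alpha$-equivalence.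 $\mathrm{FPV}(B^a)=\mathrm{Var}(a)$, $\mathrm{FNV}(B^a)=\emptyset$; products: unions; $\mathrm{FPV}(\sigma\to\rho)=\mathrm{FNV}(\sigma)\cup\mathrm{FPV}(\rho)$, $\mathrm{FNV}(\sigma\to\rho)=\mathrm{FPV}(\sigma)\cup\mathrm{FNV}(\rho)$; quantifiers remove bound variables; $\mathrm{FV}=\mathrm{FPV}\cup\mathrm{FNV}$. Instantiation: $\forall\vec i.\tau\sqsupseteq\rho$ iff $\rho=\tau\{\vec i:=\vec a\}$. Subtyping $\sqsubseteq_J$: $B^a\sqsubseteq_J B^b$ if $a\le_J b$; componentwise on products; $\sigma_1\to\rho_1\sqsubseteq_J\sigma_2\to\rho_2$ if $\sigma_2\sqsubseteq_J\sigma_1$, $\rho_1\sqsubseteq_J\rho_2$; $\forall\vec i.\rho_1\sqsubseteq_J\sigma_2$ if $\sigma_2\sqsupseteq\rho_2$, $\rho_1\sqsubseteq_J\rho_2$, $\vec i\cap\mathrm{FV}(\sigma_2)=\emptyset$. Canonicity: a monotype is canonical if it is $B^a$; a product of canonical monotypes; $B^i\to\rho'$ with $i$ an index variable, $\rho'$ canonical and $i\notin\mathrm{FNV}(\rho')$; or $\pi\to\rho'$ with $\pi$ a canonical polytype, $\rho'$ canonical and $\mathrm{FV}(\pi)\cap\mathrm{FNV}(\rho')=\emptyset$. A polytype $\forall\vec i.\rho$ is canonical if $\rho$ is canonical and $\mathrm{FNV}(\rho)\subseteq\{\vec i\}$. Every $s\in\mathcal F\cup\mathcal C$ has a declared closed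 canonical sized type $s::\sigma$ whose skeleton is the simple type of $s$. Typing $\Gamma\vdash^{\le}_J t:\rho$ ($\Gamma$ maps variables to sized types; $\Gamma|_X$ restriction): (Var) $\Gamma,x:\sigma\vdash x:\rho$ if $\sigma\sqsupseteq\rho$; (Fun) $\Gamma\vdash s:\rho$ if $s::\sigma$, $\sigma\sqsupseteq\rho$; (Let) from $\Gamma\vdash t:\rho_1\times\rho_2$, $\Gamma,x_1:\rho_1,x_2:\rho_2\vdash u:\rho$ infer $\Gamma\vdash\mathsf{let}\ (x_1,x_2)=t\ \mathsf{in}\ u:\rho$; (Pair) componentwise; (App) from $\Gamma\vdash t:(\forall\vec i.\tau_1)\to\rho$, $\Gamma\vdash u:\tau_2$, $\tau_2\sqsubseteq_J\tau_1$, $\vec i\cap\mathrm{FV}(\Gamma|_{\mathrm{FV}(u)})=\emptyset$ infer $\Gamma\vdash t\,u:\rho$; (SubType) from $\Gamma\vdash t:\tau$, $\tau\sqsubseteq_J\rho$ infer $\Gamma\vdash t:\rho$. Footprint relation $\Gamma\vdash_{FP}t:\rho$: (FpFun) if $f::\forall\vec i.\rho$ then $\emptyset\vdash_{FP}f:\rho$; (FpAppVar) if $\Gamma\vdash_{FP}s:\sigma\to\rho$ and $x$ a variable then $\Gamma\uplus\{x:\sigma\}\vdash_{FP}s\,x:\rho$; (FpAppNVar) if $\Gamma_1\vdash_{FP}s:B^i\to\rho$, $\Gamma_2\vdash_{FP}u:B^a$, $u$ not a variable, and $(\mathrm{FV}(\Gamma_1)\cup\mathrm{FV}(\rho))\cap(\mathrm{FV}(\Gamma_2)\cup\mathrm{Var}(a))=\emptyset$,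 then $\Gamma_1\uplus\Gamma_2\vdash_{FP}s\,u:\rho\{i:=a\}$. *)

theory Defs
  imports Main
begin

datatype 'b stype = SBase 'b | SProd "'b stype" "'b stype" | SArr "'b stype" "'b stype"

fun s_arity :: "'b stype \<Rightarrow> nat" where
  "s_arity (SArr _ \<tau>) = Suc (s_arity \<tau>)"
| "s_arity _ = 0"

fun s_result :: "'b stype \<Rightarrow> 'b stype" where
  "s_result (SArr _ \<tau>) = s_result \<tau>"
| "s_result \<tau> = \<tau>"

datatype ('f, 'c) symb = Fn 'f | Cn 'c

datatype ('v, 'f, 'c) trm =
    Var 'v
  | Sym "('f, 'c) symb"
  | App "('v, 'f, 'c) trm" "('v, 'f, 'c) trm"
  | Pair "('v, 'f, 'c) trm" "('v, 'f, 'c) trm"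
  | Let 'v 'v "('v, 'f, 'c) trm" "('v, 'f, 'c) trm"   \<comment> \<open>let (x,y) = t in u\<close>

definition apps :: "('v, 'f, 'c) trm \<Rightarrow> ('v, 'f, 'c) trm list \<Rightarrow> ('v, 'f, 'c) trm" where
  "apps h ts = foldl App h ts"

fun is_var :: "('v, 'f, 'c) trm \<Rightarrow> bool" where
  "is_var (Var _) = True"
| "is_var _ = False"

fun tfv :: "('v, 'f, 'c) trm \<Rightarrow> 'v set" where
  "tfv (Var x) = {x}"
| "tfv (Sym _) = {}"
| "tfv (App t u) = tfv t \<union> tfv u"
| "tfv (Pair t u) = tfv t \<union> tfv u"
| "tfv (Let x y t u) = tfv t \<union> (tfv u - {x, y})"

fun var_occs :: "('v, 'f, 'c) trm \<Rightarrow> 'v list" where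
  "var_occs (Var x) = [x]"
| "var_occs (Sym _) = []"
| "var_occs (App t u) = var_occs t @ var_occs u"
| "var_occs (Pair t u) = var_occs t @ var_occs u"
| "var_occs (Let x y t u) = var_occs t @ var_occs u"

definition linear :: "('v, 'f, 'c) trm \<Rightarrow> bool" where
  "linear t \<longleftrightarrow> distinct (var_occs t)"

text \<open>Term substitution (only applied to let-free terms below).\<close>
fun tsubst :: "('v \<Rightarrow> ('v, 'f, 'c) trm) \<Rightarrow> ('v, 'f, 'c) trm \<Rightarrow> ('v, 'f, 'c) trm" where
  "tsubst \<sigma> (Var x) = \<sigma> x"
| "tsubst \<sigma> (Sym s) = Sym s"
| "tsubst \<sigma> (App t u) = App (tsubst \<sigma> t) (tsubst \<sigma> u)"
| "tsubst \<sigma> (Pair t u) = Pair (tsubst \<sigma> t) (tsubst \<sigma> u)"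
| "tsubst \<sigma> (Let x y t u) = Let x y (tsubst \<sigma> t) (tsubst (\<sigma>(x := Var x, y := Var y)) u)"

inductive is_pat :: "(('f, 'c) symb \<Rightarrow> 'b stype) \<Rightarrow> ('v, 'f, 'c) trm \<Rightarrow> bool"
  for styp where
  pat_var: "is_pat styp (Var x)"
| pat_con: "\<lbrakk> s_result (styp (Cn c)) = SBase B;
             length ps = s_arity (styp (Cn c));
             \<forall>p\<in>set ps. is_pat styp p \<rbrakk>
           \<Longrightarrow> is_pat styp (apps (Sym (Cn c)) ps)"

text \<open>Free index variables are named by naturals (IFree); variables bound by a
  sized-type quantifier are represented locally nameless: IBnd d j is the j-th variable
  of the d-th enclosing quantifier.\<close>
datatype 'g ix =
    IFree nat
  | IBnd nat nat
  | IZero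
  | ISuc "'g ix"
  | IPlus "'g ix" "'g ix"
  | IFn 'g "'g ix list"

primrec ieval :: "('g \<Rightarrow> nat list \<Rightarrow> nat) \<Rightarrow> (nat \<Rightarrow> nat) \<Rightarrow> 'g ix \<Rightarrow> nat" where
  "ieval J \<alpha> (IFree i) = \<alpha> i"
| "ieval J \<alpha> (IBnd d j) = 0"
| "ieval J \<alpha> IZero = 0"
| "ieval J \<alpha> (ISuc a) = Suc (ieval J \<alpha> a)"
| "ieval J \<alpha> (IPlus a b) = ieval J \<alpha> a + ieval J \<alpha> b"
| "ieval J \<alpha> (IFn g as) = J g (map (ieval J \<alpha>) as)"

definition weakly_monotone_interp :: "('g \<Rightarrow> nat list \<Rightarrow> nat) \<Rightarrow> bool" where
  "weakly_monotone_interp J \<longleftrightarrow>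
     (\<forall>g xs ys. list_all2 (\<le>) xs ys \<longrightarrow> J g xs \<le> J g ys)"

definition ix_le :: "('g \<Rightarrow> nat list \<Rightarrow> nat) \<Rightarrow> 'g ix \<Rightarrow> 'g ix \<Rightarrow> bool" where
  "ix_le J a b \<longleftrightarrow> (\<forall>\<alpha>. ieval J \<alpha> a \<le> ieval J \<alpha> b)"

primrec ifv :: "'g ix \<Rightarrow> nat set" where
  "ifv (IFree i) = {i}"
| "ifv (IBnd d j) = {}"
| "ifv IZero = {}"
| "ifv (ISuc a) = ifv a"
| "ifv (IPlus a b) = ifv a \<union> ifv b"
| "ifv (IFn g as) = \<Union> (set (map ifv as))"

primrec iopen :: "nat \<Rightarrow> 'g ix list \<Rightarrow> 'g ix \<Rightarrow> 'g ix" where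
  "iopen k as (IFree i) = IFree i"
| "iopen k as (IBnd d j) = (if d = k \<and> j < length as then as ! j else IBnd d j)"
| "iopen k as IZero = IZero"
| "iopen k as (ISuc a) = ISuc (iopen k as a)"
| "iopen k as (IPlus a b) = IPlus (iopen k as a) (iopen k as b)"
| "iopen k as (IFn g bs) = IFn g (map (iopen k as) bs)"

primrec isub :: "(nat \<Rightarrow> 'g ix) \<Rightarrow> 'g ix \<Rightarrow> 'g ix" where
  "isub \<theta> (IFree i) = \<theta> i"
| "isub \<theta> (IBnd d j) = IBnd d j"
| "isub \<theta> IZero = IZero"
| "isub \<theta> (ISuc a) = ISuc (isub \<theta> a)"
| "isub \<theta> (IPlus a b) = IPlus (isub \<theta> a) (isub \<theta> b)"
| "isub \<theta> (IFn g bs) = IFn g (map (isub \<theta>) bs)"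

text \<open>Local closedness w.r.t. a stack of quantifier sizes (innermost first).\<close>
primrec ilc :: "nat list \<Rightarrow> 'g ix \<Rightarrow> bool" where
  "ilc ks (IFree i) = True"
| "ilc ks (IBnd d j) = (d < length ks \<and> j < ks ! d)"
| "ilc ks IZero = True"
| "ilc ks (ISuc a) = ilc ks a"
| "ilc ks (IPlus a b) = (ilc ks a \<and> ilc ks b)"
| "ilc ks (IFn g bs) = list_all (ilc ks) bs"

text \<open>mty = monotypes, sty = types (Forall n rho binds n index variables; Forall 0 rho
  is the monotype rho).\<close>
datatype ('b, 'g) mty =
    Base 'b "'g ix"
  | Prod "('b, 'g) mty" "('b, 'g) mty"
  | Arr "('b, 'g) sty" "('b, 'g) mty"
and ('b, 'g) sty = Forall nat "('b, 'g) mty"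

abbreviation Mono :: "('b, 'g) mty \<Rightarrow> ('b, 'g) sty" where
  "Mono \<rho> \<equiv> Forall 0 \<rho>"

fun is_arr :: "('b, 'g) mty \<Rightarrow> bool" where
  "is_arr (Arr _ _) = True"
| "is_arr _ = False"

fun fpv_m :: "('b, 'g) mty \<Rightarrow> nat set"
  and fnv_m :: "('b, 'g) mty \<Rightarrow> nat set"
  and fpv_s :: "('b, 'g) sty \<Rightarrow> nat set"
  and fnv_s :: "('b, 'g) sty \<Rightarrow> nat set" where
  "fpv_m (Base B a) = ifv a"
| "fpv_m (Prod r1 r2) = fpv_m r1 \<union> fpv_m r2"
| "fpv_m (Arr s r) = fnv_s s \<union> fpv_m r"
| "fnv_m (Base B a) = {}"
| "fnv_m (Prod r1 r2) = fnv_m r1 \<union> fnv_m r2"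
| "fnv_m (Arr s r) = fpv_s s \<union> fnv_m r"
| "fpv_s (Forall n r) = fpv_m r"
| "fnv_s (Forall n r) = fnv_m r"

definition fv_m :: "('b, 'g) mty \<Rightarrow> nat set" where
  "fv_m r = fpv_m r \<union> fnv_m r"

definition fv_s :: "('b, 'g) sty \<Rightarrow> nat set" where
  "fv_s s = fpv_s s \<union> fnv_s s"

primrec open_m :: "nat \<Rightarrow> 'g ix list \<Rightarrow> ('b, 'g) mty \<Rightarrow> ('b, 'g) mty"
  and open_s :: "nat \<Rightarrow> 'g ix list \<Rightarrow> ('b, 'g) sty \<Rightarrow> ('b, 'g) sty" where
  "open_m k as (Base B a) = Base B (iopen k as a)"
| "open_m k as (Prod r1 r2) = Prod (open_m k as r1) (open_m k as r2)"
| "open_m k as (Arr s r) = Arr (open_s k as s) (open_m k as r)"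
| "open_s k as (Forall n r) = Forall n (open_m (Suc k) as r)"

primrec isub_m :: "(nat \<Rightarrow> 'g ix) \<Rightarrow> ('b, 'g) mty \<Rightarrow> ('b, 'g) mty"
  and isub_s :: "(nat \<Rightarrow> 'g ix) \<Rightarrow> ('b, 'g) sty \<Rightarrow> ('b, 'g) sty" where
  "isub_m \<theta> (Base B a) = Base B (isub \<theta> a)"
| "isub_m \<theta> (Prod r1 r2) = Prod (isub_m \<theta> r1) (isub_m \<theta> r2)"
| "isub_m \<theta> (Arr s r) = Arr (isub_s \<theta> s) (isub_m \<theta> r)"
| "isub_s \<theta> (Forall n r) = Forall n (isub_m \<theta> r)"

primrec lc_m :: "nat list \<Rightarrow> ('b, 'g) mty \<Rightarrow> bool"
  and lc_s :: "nat list \<Rightarrow> ('b, 'g) sty \<Rightarrow> bool" where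
  "lc_m ks (Base B a) = ilc ks a"
| "lc_m ks (Prod r1 r2) = (lc_m ks r1 \<and> lc_m ks r2)"
| "lc_m ks (Arr s r) = (lc_s ks s \<and> lc_m ks r)"
| "lc_s ks (Forall n r) = lc_m (n # ks) r"

primrec wf_m :: "('b, 'g) mty \<Rightarrow> bool"
  and wf_s :: "('b, 'g) sty \<Rightarrow> bool" where
  "wf_m (Base B a) = True"
| "wf_m (Prod r1 r2) = (wf_m r1 \<and> wf_m r2)"
| "wf_m (Arr s r) = (wf_s s \<and> wf_m r)"
| "wf_s (Forall n r) = ((0 < n \<longrightarrow> is_arr r) \<and> wf_m r)"

primrec skel_m :: "('b, 'g) mty \<Rightarrow> 'b stype"
  and skel_s :: "('b, 'g) sty \<Rightarrow> 'b stype" where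
  "skel_m (Base B a) = SBase B"
| "skel_m (Prod r1 r2) = SProd (skel_m r1) (skel_m r2)"
| "skel_m (Arr s r) = SArr (skel_s s) (skel_m r)"
| "skel_s (Forall n r) = skel_m r"

definition closed_s :: "('b, 'g) sty \<Rightarrow> bool" where
  "closed_s s \<longleftrightarrow> lc_s [] s \<and> fv_s s = {}"

definition fresh_names :: "nat \<Rightarrow> nat set \<Rightarrow> nat list \<Rightarrow> bool" where
  "fresh_names n S is \<longleftrightarrow> length is = n \<and> distinct is \<and> set is \<inter> S = {}"

abbreviation open_names :: "nat list \<Rightarrow> ('b, 'g) mty \<Rightarrow> ('b, 'g) mty" where
  "open_names is r \<equiv> open_m 0 (map IFree is) r"

definition inst :: "('b, 'g) sty \<Rightarrow> ('b, 'g) mty \<Rightarrow> bool" where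
  "inst s r \<longleftrightarrow> (case s of Forall n t \<Rightarrow>
      \<exists>as. length as = n \<and> (\<forall>a\<in>set as. ilc [] a) \<and> r = open_m 0 as t)"

inductive subm :: "('g \<Rightarrow> nat list \<Rightarrow> nat) \<Rightarrow> ('b, 'g) mty \<Rightarrow> ('b, 'g) mty \<Rightarrow> bool"
  and subs :: "('g \<Rightarrow> nat list \<Rightarrow> nat) \<Rightarrow> ('b, 'g) sty \<Rightarrow> ('b, 'g) sty \<Rightarrow> bool"
  for J where
  sub_base: "ix_le J a b \<Longrightarrow> subm J (Base B a) (Base B b)"
| sub_prod: "\<lbrakk> subm J r1 r2; subm J r1' r2' \<rbrakk> \<Longrightarrow> subm J (Prod r1 r1') (Prod r2 r2')"
| sub_arr: "\<lbrakk> subs J s2 s1; subm J r1 r2 \<rbrakk> \<Longrightarrow> subm J (Arr s1 r1) (Arr s2 r2)"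
| sub_all: "\<lbrakk> fresh_names n (fv_s (Forall n r1) \<union> fv_s s2) is; inst s2 r2;
             subm J (open_names is r1) r2 \<rbrakk> \<Longrightarrow> subs J (Forall n r1) s2"

type_synonym ('v, 'b, 'g) ctx = "'v \<rightharpoonup> ('b, 'g) sty"

definition ctx_fv :: "('v, 'b, 'g) ctx \<Rightarrow> nat set" where
  "ctx_fv \<Gamma> = \<Union> (fv_s ` ran \<Gamma>)"

inductive sized_typ :: "(('f, 'c) symb \<Rightarrow> ('b, 'g) sty) \<Rightarrow> ('g \<Rightarrow> nat list \<Rightarrow> nat)
    \<Rightarrow> ('v, 'b, 'g) ctx \<Rightarrow> ('v, 'f, 'c) trm \<Rightarrow> ('b, 'g) mty \<Rightarrow> bool"
  for decl J where
  T_Var: "\<lbrakk> \<Gamma> x = Some s; inst s r \<rbrakk> \<Longrightarrow> sized_typ decl J \<Gamma> (Var x) r"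
| T_Fun: "inst (decl f) r \<Longrightarrow> sized_typ decl J \<Gamma> (Sym f) r"
| T_Let: "\<lbrakk> sized_typ decl J \<Gamma> t (Prod r1 r2);
            sized_typ decl J (\<Gamma>(x1 \<mapsto> Mono r1, x2 \<mapsto> Mono r2)) u r \<rbrakk>
          \<Longrightarrow> sized_typ decl J \<Gamma> (Let x1 x2 t u) r"
| T_Pair: "\<lbrakk> sized_typ decl J \<Gamma> t r1; sized_typ decl J \<Gamma> u r2 \<rbrakk>
          \<Longrightarrow> sized_typ decl J \<Gamma> (Pair t u) (Prod r1 r2)"
| T_App: "\<lbrakk> sized_typ decl J \<Gamma> t (Arr (Forall n t1) r); sized_typ decl J \<Gamma> u t2;
            fresh_names n (fv_s (Forall n t1) \<union> ctx_fv (\<Gamma> |` tfv u)) is;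
            subm J t2 (open_names is t1) \<rbrakk>
          \<Longrightarrow> sized_typ decl J \<Gamma> (App t u) r"
| T_Sub: "\<lbrakk> sized_typ decl J \<Gamma> t r1; subm J r1 r \<rbrakk> \<Longrightarrow> sized_typ decl J \<Gamma> t r"

inductive fp :: "(('f, 'c) symb \<Rightarrow> ('b, 'g) sty)
    \<Rightarrow> ('v, 'b, 'g) ctx \<Rightarrow> ('v, 'f, 'c) trm \<Rightarrow> ('b, 'g) mty \<Rightarrow> bool"
  for decl where
  Fp_Fun: "\<lbrakk> decl f = Forall n r; fresh_names n (fv_s (decl f)) is \<rbrakk>
           \<Longrightarrow> fp decl Map.empty (Sym f) (open_names is r)"
| Fp_AppVar: "\<lbrakk> fp decl \<Gamma> s (Arr \<sigma> r); x \<notin> dom \<Gamma> \<rbrakk>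
           \<Longrightarrow> fp decl (\<Gamma>(x \<mapsto> \<sigma>)) (App s (Var x)) r"
| Fp_AppNVar: "\<lbrakk> fp decl \<Gamma>1 s (Arr (Mono (Base B (IFree i))) r);
                 fp decl \<Gamma>2 u (Base B a); \<not> is_var u;
                 dom \<Gamma>1 \<inter> dom \<Gamma>2 = {};
                 (ctx_fv \<Gamma>1 \<union> fv_m r) \<inter> (ctx_fv \<Gamma>2 \<union> ifv a) = {} \<rbrakk>
           \<Longrightarrow> fp decl (\<Gamma>1 ++ \<Gamma>2) (App s u) (isub_m (IFree(i := a)) r)"

inductive canon_m :: "('b, 'g) mty \<Rightarrow> bool"
  and canon_s :: "('b, 'g) sty \<Rightarrow> bool" where
  can_base: "canon_m (Base B a)"
| can_prod: "\<lbrakk> canon_m r1; canon_m r2 \<rbrakk> \<Longrightarrow> canon_m (Prod r1 r2)"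
| can_arr_var: "\<lbrakk> canon_m r; i \<notin> fnv_m r \<rbrakk> \<Longrightarrow> canon_m (Arr (Mono (Base B (IFree i))) r)"
| can_arr_poly: "\<lbrakk> canon_s (Forall n p); is_arr p; canon_m r;
                   fv_s (Forall n p) \<inter> fnv_m r = {} \<rbrakk>
                 \<Longrightarrow> canon_m (Arr (Forall n p) r)"
| can_poly: "\<lbrakk> fresh_names n (fv_s (Forall n r)) is; canon_m (open_names is r);
               fnv_m (open_names is r) \<subseteq> set is \<rbrakk> \<Longrightarrow> canon_s (Forall n r)"

end

theory Submission
  imports Defs
begin

text \<open>
  The footprint of \<open>f p\<^sub>1 \<cdots> p\<^sub>n\<close> is built along the application spine.  Inverting the typing of
  \<open>(f p\<^sub>1 \<cdots> p\<^sub>k\<^sub>-\<^sub>1)\<sigma> (p\<^sub>k\<sigma>)\<close> yields an arrow type for the head; the head's footprint, instantiated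
  by \<open>\<theta>\<close>, is a subtype of it, so by contravariance \<open>p\<^sub>k\<sigma>\<close> has an instance of the argument
  scheme of the footprint.  A variable pattern records this scheme in \<open>\<Gamma>\<close>, and \<open>\<theta>\<close> is extended
  on fresh names by the instance.  For a constructor pattern, canonicity of the declared
  types forces the argument type to be \<open>B\<^sup>i\<close> with \<open>i\<close> not occurring negatively in the result;
  the footprint \<open>B\<^sup>a\<close> of \<open>p\<^sub>k\<close> is substituted for \<open>i\<close>, and since \<open>a\<theta> \<le> \<theta>(i)\<close> and \<open>i\<close> occurs only
  positively, the result is still below the required type.  Footprints of different
  patterns use disjoint sets of index names, so their substitutions can be merged.
\<close>

section \<open>Index terms\<close>

lemma ieval_isub: "ieval J \<alpha> (isub \<theta> a) = ieval J (\<lambda>j. ieval J \<alpha> (\<theta> j)) a"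
  by (induction a) (simp_all add: comp_def cong: map_cong)

lemma ieval_mono:
  assumes "weakly_monotone_interp J" "\<forall>j\<in>ifv a. \<alpha> j \<le> \<beta> j"
  shows "ieval J \<alpha> a \<le> ieval J \<beta> a"
  using assms(2)
proof (induction a)
  case (IFn g as)
  then have "list_all2 (\<le>) (map (ieval J \<alpha>) as) (map (ieval J \<beta>) as)"
    by (auto simp: list_all2_conv_all_nth)
  then show ?case using assms(1) unfolding weakly_monotone_interp_def by simp
qed auto

lemma iopen_closed: "ilc [] a \<Longrightarrow> iopen k as a = a"
  by (induction a) (auto simp: list_all_iff intro: map_idI)

lemma ilc_Nil_imp: "ilc [] a \<Longrightarrow> ilc ks a"
  by (induction a) (auto simp: list_all_iff)

definition closed_isub :: "(nat \<Rightarrow> 'g ix) \<Rightarrow> bool" where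
  "closed_isub \<theta> \<longleftrightarrow> (\<forall>j. ilc [] (\<theta> j))"

lemma closed_isub_IFree [simp]: "closed_isub IFree"
  by (simp add: closed_isub_def)

lemma isub_iopen:
  "closed_isub \<theta> \<Longrightarrow> isub \<theta> (iopen k as a) = iopen k (map (isub \<theta>) as) (isub \<theta> a)"
  by (induction a) (auto simp: iopen_closed closed_isub_def)

lemma isub_cong: "(\<forall>j\<in>ifv a. \<theta> j = \<theta>' j) \<Longrightarrow> isub \<theta> a = isub \<theta>' a"
  by (induction a) auto

lemma isub_IFree [simp]: "isub IFree a = a"
  by (induction a) (auto intro: map_idI)

lemma isub_isub: "isub \<theta> (isub \<theta>' a) = isub (isub \<theta> \<circ> \<theta>') a"
  by (induction a) auto

lemma isub_comp_IFree [simp]: "isub \<theta> \<circ> IFree = \<theta>"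
  by auto

lemma ifv_isub: "ifv (isub \<theta> a) = (\<Union>j\<in>ifv a. ifv (\<theta> j))"
  by (induction a) auto

lemma ifv_iopen: "ifv (iopen k as a) \<subseteq> ifv a \<union> \<Union>(ifv ` set as)"
  by (induction a) (auto dest: nth_mem)

lemma ilc_isub: "closed_isub \<theta> \<Longrightarrow> ilc ks (isub \<theta> a) = ilc ks a"
  by (induction a) (auto simp: list_all_iff ilc_Nil_imp closed_isub_def)

lemma ilc_iopen:
  "\<lbrakk> ilc (ks @ [n]) a; length ks = k; length as = n; \<forall>b\<in>set as. ilc [] b \<rbrakk>
     \<Longrightarrow> ilc ks (iopen k as a)"
  by (induction a) (auto simp: list_all_iff nth_append ilc_Nil_imp less_Suc_eq split: if_splits)

lemma finite_ifv: "finite (ifv a)"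
  by (induction a) auto

lemma ix_le_refl: "ix_le J a a"
  by (simp add: ix_le_def)

lemma ix_le_trans: "ix_le J a b \<Longrightarrow> ix_le J b c \<Longrightarrow> ix_le J a c"
  unfolding ix_le_def by (meson order_trans)

lemma ix_le_isub: "ix_le J a b \<Longrightarrow> ix_le J (isub \<theta> a) (isub \<theta> b)"
  unfolding ix_le_def by (simp add: ieval_isub)

lemma ix_le_isub_mono:
  "weakly_monotone_interp J \<Longrightarrow> \<forall>j\<in>ifv a. ix_le J (\<theta> j) (\<theta>' j) \<Longrightarrow> ix_le J (isub \<theta> a) (isub \<theta>' a)"
  unfolding ix_le_def by (auto simp: ieval_isub intro!: ieval_mono)

section \<open>Sized types and index substitutions\<close>

lemma fv_simps [simp]:
  "fv_m (Base B a) = ifv a"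
  "fv_m (Prod r1 r2) = fv_m r1 \<union> fv_m r2"
  "fv_m (Arr s r) = fv_s s \<union> fv_m r"
  "fv_s (Forall n r) = fv_m r"
  by (auto simp: fv_m_def fv_s_def)

text \<open>A size that, unlike the datatype size, is invariant under opening and substitution.\<close>
primrec tsize_m :: "('b, 'g) mty \<Rightarrow> nat" and tsize_s :: "('b, 'g) sty \<Rightarrow> nat" where
  "tsize_m (Base B a) = 1"
| "tsize_m (Prod a b) = Suc (tsize_m a + tsize_m b)"
| "tsize_m (Arr s r) = Suc (tsize_s s + tsize_m r)"
| "tsize_s (Forall n r) = tsize_m r"

lemma isub_open:
  fixes r :: "('b, 'g) mty" and s :: "('b, 'g) sty"
  assumes "closed_isub \<theta>"
  shows "isub_m \<theta> (open_m k as r) = open_m k (map (isub \<theta>) as) (isub_m \<theta> r)"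
    and "isub_s \<theta> (open_s k as s) = open_s k (map (isub \<theta>) as) (isub_s \<theta> s)"
  using assms
  by (induction r and s arbitrary: k and k rule: mty.induct sty.induct)
     (auto simp: isub_iopen)

lemma isub_cong_m:
  fixes r :: "('b, 'g) mty" and s :: "('b, 'g) sty"
  shows "\<forall>j\<in>fv_m r. \<theta> j = \<theta>' j \<Longrightarrow> isub_m \<theta> r = isub_m \<theta>' r"
    and "\<forall>j\<in>fv_s s. \<theta> j = \<theta>' j \<Longrightarrow> isub_s \<theta> s = isub_s \<theta>' s"
  by (induction r and s rule: mty.induct sty.induct) (auto intro: isub_cong)

lemma isub_IFree_m [simp]:
  fixes r :: "('b, 'g) mty" and s :: "('b, 'g) sty"
  shows "isub_m IFree r = r" "isub_s IFree s = s"
  by (induction r and s rule: mty.induct sty.induct) auto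

lemma isub_isub_m:
  fixes r :: "('b, 'g) mty" and s :: "('b, 'g) sty"
  shows "isub_m \<theta> (isub_m \<theta>' r) = isub_m (isub \<theta> \<circ> \<theta>') r"
    and "isub_s \<theta> (isub_s \<theta>' s) = isub_s (isub \<theta> \<circ> \<theta>') s"
  by (induction r and s rule: mty.induct sty.induct) (auto simp: isub_isub comp_def)

lemma fpv_fnv_isub:
  fixes r :: "('b, 'g) mty" and s :: "('b, 'g) sty"
  shows "fpv_m (isub_m \<theta> r) = (\<Union>j\<in>fpv_m r. ifv (\<theta> j)) \<and> fnv_m (isub_m \<theta> r) = (\<Union>j\<in>fnv_m r. ifv (\<theta> j))"
    and "fpv_s (isub_s \<theta> s) = (\<Union>j\<in>fpv_s s. ifv (\<theta> j)) \<and> fnv_s (isub_s \<theta> s) = (\<Union>j\<in>fnv_s s. ifv (\<theta> j))"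
  by (induction r and s rule: mty.induct sty.induct) (simp_all add: ifv_isub)

lemma fv_isub: "fv_m (isub_m \<theta> r) = (\<Union>j\<in>fv_m r. ifv (\<theta> j))"
  using fpv_fnv_isub(1)[of \<theta> r] by (simp add: fv_m_def UN_Un)

lemma fpv_fnv_open:
  fixes r :: "('b, 'g) mty" and s :: "('b, 'g) sty"
  shows "fpv_m (open_m k as r) \<subseteq> fpv_m r \<union> \<Union>(ifv ` set as)
         \<and> fnv_m (open_m k as r) \<subseteq> fnv_m r \<union> \<Union>(ifv ` set as)"
    and "fpv_s (open_s k as s) \<subseteq> fpv_s s \<union> \<Union>(ifv ` set as)
         \<and> fnv_s (open_s k as s) \<subseteq> fnv_s s \<union> \<Union>(ifv ` set as)"
proof (induction r and s arbitrary: k and k rule: mty.induct sty.induct)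
  case (Base B a)
  then show ?case using ifv_iopen by auto
next
  case (Prod r1 r2)
  show ?case using Prod.IH(1)[of k] Prod.IH(2)[of k] by auto
next
  case (Arr s r)
  show ?case using Arr.IH(1)[of k] Arr.IH(2)[of k] by auto
next
  case (Forall n r)
  show ?case using Forall.IH[of "Suc k"] by auto
qed

lemma fv_open: "fv_m (open_m k as r) \<subseteq> fv_m r \<union> \<Union>(ifv ` set as)"
  using fpv_fnv_open(1)[of k as r] by (auto simp: fv_m_def)

lemma fv_open_names: "fv_m (open_names is r) \<subseteq> fv_m r \<union> set is"
  using fv_open[of 0 "map IFree is" r] by auto

lemma lc_isub:
  fixes r :: "('b, 'g) mty" and s :: "('b, 'g) sty"
  assumes "closed_isub \<theta>"
  shows "lc_m ks (isub_m \<theta> r) = lc_m ks r" and "lc_s ks (isub_s \<theta> s) = lc_s ks s"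
  using assms
  by (induction r and s arbitrary: ks and ks rule: mty.induct sty.induct)
     (auto simp: ilc_isub)

lemma lc_open:
  fixes r :: "('b, 'g) mty" and s :: "('b, 'g) sty"
  shows "\<lbrakk> lc_m (ks @ [n]) r; length ks = k; length as = n; \<forall>b\<in>set as. ilc [] b \<rbrakk>
           \<Longrightarrow> lc_m ks (open_m k as r)"
    and "\<lbrakk> lc_s (ks @ [n]) s; length ks = k; length as = n; \<forall>b\<in>set as. ilc [] b \<rbrakk>
           \<Longrightarrow> lc_s ks (open_s k as s)"
proof (induction r and s arbitrary: ks k and ks k rule: mty.induct sty.induct)
  case (Forall m r)
  then show ?case by (auto intro: Forall.IH[where ks="m # ks", simplified])
qed (auto intro: ilc_iopen)

lemma wf_isub [simp]:
  fixes r :: "('b, 'g) mty" and s :: "('b, 'g) sty"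
  shows "wf_m (isub_m \<theta> r) = wf_m r" "wf_s (isub_s \<theta> s) = wf_s s"
  by (induction r and s rule: mty.induct sty.induct) (auto, (case_tac x2; simp)+)

lemma wf_open [simp]:
  fixes r :: "('b, 'g) mty" and s :: "('b, 'g) sty"
  shows "wf_m (open_m k as r) = wf_m r" "wf_s (open_s k as s) = wf_s s"
  by (induction r and s arbitrary: k and k rule: mty.induct sty.induct) (auto, (case_tac x2; simp)+)

lemma skel_isub [simp]:
  fixes r :: "('b, 'g) mty" and s :: "('b, 'g) sty"
  shows "skel_m (isub_m \<theta> r) = skel_m r" "skel_s (isub_s \<theta> s) = skel_s s"
  by (induction r and s rule: mty.induct sty.induct) auto

lemma skel_open [simp]:
  fixes r :: "('b, 'g) mty" and s :: "('b, 'g) sty"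
  shows "skel_m (open_m k as r) = skel_m r" "skel_s (open_s k as s) = skel_s s"
  by (induction r and s arbitrary: k and k rule: mty.induct sty.induct) auto

lemma tsize_open [simp]:
  fixes r :: "('b, 'g) mty" and s :: "('b, 'g) sty"
  shows "tsize_m (open_m k as r) = tsize_m r" "tsize_s (open_s k as s) = tsize_s s"
  by (induction r and s arbitrary: k and k rule: mty.induct sty.induct) auto

lemma finite_fv:
  fixes r :: "('b, 'g) mty" and s :: "('b, 'g) sty"
  shows "finite (fv_m r)" "finite (fv_s s)"
  by (induction r and s rule: mty.induct sty.induct) (auto simp: finite_ifv)

lemma skel_eq_SBase: "skel_m r = SBase B \<Longrightarrow> \<exists>a. r = Base B a"
  by (cases r) auto

lemma isub_m_eq_Arr:
  "isub_m \<theta> r = Arr s1 r1 \<Longrightarrow> \<exists>s0 r0. r = Arr s0 r0 \<and> s1 = isub_s \<theta> s0 \<and> r1 = isub_m \<theta> r0"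
  by (cases r) auto

lemma fresh_names_exists: "finite S \<Longrightarrow> \<exists>is. fresh_names n S is"
proof -
  assume "finite S"
  define m where "m = Suc (Max (insert 0 S))"
  have "\<forall>x\<in>S. x < m"
    using \<open>finite S\<close> by (auto simp: m_def le_imp_less_Suc)
  then have "fresh_names n S [m..<m + n]"
    by (auto simp: fresh_names_def)
  then show ?thesis ..
qed

definition upds :: "(nat \<Rightarrow> 'g ix) \<Rightarrow> nat list \<Rightarrow> 'g ix list \<Rightarrow> nat \<Rightarrow> 'g ix" where
  "upds \<theta> is as j = (case map_of (zip is as) j of Some a \<Rightarrow> a | None \<Rightarrow> \<theta> j)"

lemma upds_notin: "j \<notin> set is \<Longrightarrow> upds \<theta> is as j = \<theta> j"
  by (auto simp: upds_def split: option.split dest!: map_of_SomeD set_zip_leftD)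

lemma upds_map: "distinct is \<Longrightarrow> length is = length as \<Longrightarrow> map (upds \<theta> is as) is = as"
  by (auto simp: upds_def map_of_zip_nth intro!: nth_equalityI)

lemma upds_nth: "distinct is \<Longrightarrow> length is = length as \<Longrightarrow> k < length is \<Longrightarrow> upds \<theta> is as (is ! k) = as ! k"
  by (simp add: upds_def map_of_zip_nth)

lemma upds_self: "j \<in> set is \<Longrightarrow> upds \<theta> is (map IFree is) j = IFree j"
  by (induction "is") (auto simp: upds_def)

lemma upds_cases: "upds \<theta> is as j = \<theta> j \<or> upds \<theta> is as j \<in> set as"
  by (auto simp: upds_def split: option.split dest!: map_of_SomeD set_zip_rightD)

lemma upds_rename_inj:
  assumes "distinct is" "distinct js" "length is = length js"
  shows "inj_on (upds IFree is (map IFree js)) (set is)"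
proof (rule inj_onI)
  fix x y
  assume "x \<in> set is" "y \<in> set is" and eq: "upds IFree is (map IFree js) x = upds IFree is (map IFree js) y"
  then obtain a b where "a < length is" "x = is ! a" "b < length is" "y = is ! b"
    by (auto simp: in_set_conv_nth)
  with eq assms have "js ! a = js ! b"
    by (simp add: upds_nth)
  with assms \<open>a < length is\<close> \<open>b < length is\<close> \<open>x = is ! a\<close> \<open>y = is ! b\<close> show "x = y"
    by (simp add: nth_eq_iff_index_eq)
qed

lemma closed_isub_upds: "closed_isub \<theta> \<Longrightarrow> \<forall>a\<in>set as. ilc [] a \<Longrightarrow> closed_isub (upds \<theta> is as)"
  using upds_cases by (metis closed_isub_def)

lemma isub_upds_fresh:
  "set is \<inter> fv_m t = {} \<Longrightarrow> isub_m (upds \<theta> is as) t = isub_m \<theta> t"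
  "set is \<inter> fv_s s = {} \<Longrightarrow> isub_s (upds \<theta> is as) s = isub_s \<theta> s"
  by (intro isub_cong_m; metis disjoint_iff upds_notin)+

lemma isub_open_upds:
  assumes "closed_isub \<theta>" "distinct is" "length as = length is" "\<forall>a\<in>set as. ilc [] a"
    and "set is \<inter> fv_m t = {}"
  shows "isub_m (upds \<theta> is as) (open_names is t) = open_m 0 as (isub_m \<theta> t)"
proof -
  have "closed_isub (upds \<theta> is as)"
    using assms(1,4) by (rule closed_isub_upds)
  moreover have "map (isub (upds \<theta> is as)) (map IFree is) = as"
    using upds_map[OF assms(2) assms(3)[symmetric]] by simp
  ultimately show ?thesis
    using isub_open(1)[of "upds \<theta> is as" 0 "map IFree is" t] isub_upds_fresh(1)[OF assms(5)] by simp
qed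

lemma inst_isub:
  assumes "closed_isub \<theta>" "inst s r"
  shows "inst (isub_s \<theta> s) (isub_m \<theta> r)"
proof (cases s)
  case (Forall n t)
  then obtain as where "length as = n" "\<forall>a\<in>set as. ilc [] a" "r = open_m 0 as t"
    using assms(2) by (auto simp: inst_def)
  then show ?thesis
    using assms(1) Forall
    by (auto simp: inst_def isub_open ilc_isub closed_isub_def intro!: exI[of _ "map (isub \<theta>) as"])
qed

lemma inst_open_names: "length is = n \<Longrightarrow> inst (Forall n r) (open_names is r)"
  by (auto simp: inst_def intro!: exI[of _ "map IFree is"])

section \<open>Subtyping\<close>

lemma subm_isub:
  fixes r1 r2 :: "('b, 'g) mty" and s1 s2 :: "('b, 'g) sty"
  shows "subm J r1 r2 \<Longrightarrow> closed_isub \<theta> \<Longrightarrow> subm J (isub_m \<theta> r1) (isub_m \<theta> r2)"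
    and "subs J s1 s2 \<Longrightarrow> closed_isub \<theta> \<Longrightarrow> subs J (isub_s \<theta> s1) (isub_s \<theta> s2)"
proof (induction arbitrary: \<theta> and \<theta> rule: subm_subs.inducts)
  case (sub_all n r1 s2 "is" r2)
  obtain is' where fresh': "fresh_names n (fv_m (isub_m \<theta> r1) \<union> fv_s (isub_s \<theta> s2)) is'"
    using fresh_names_exists finite_fv by (metis finite_UnI)
  define \<theta>' where "\<theta>' = upds \<theta> is (map IFree is')"
  have closed': "closed_isub \<theta>'"
    unfolding \<theta>'_def using sub_all.prems by (intro closed_isub_upds) auto
  have "isub_m \<theta>' (open_names is r1) = open_names is' (isub_m \<theta> r1)"
    unfolding \<theta>'_def using sub_all.hyps(1) fresh' sub_all.prems
    by (intro isub_open_upds) (auto simp: fresh_names_def)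
  then have "subm J (open_names is' (isub_m \<theta> r1)) (isub_m \<theta>' r2)"
    using sub_all(4)[OF closed'] by simp
  moreover have "isub_s \<theta>' s2 = isub_s \<theta> s2"
    unfolding \<theta>'_def using sub_all.hyps(1) by (intro isub_upds_fresh) (auto simp: fresh_names_def)
  then have "inst (isub_s \<theta> s2) (isub_m \<theta>' r2)"
    using inst_isub[OF closed' sub_all.hyps(2)] by simp
  ultimately show ?case
    using fresh' by (auto intro!: subm_subs.sub_all)
qed (auto intro!: subm_subs.intros simp: ix_le_isub)

lemma subs_instance:
  assumes "subs J (Forall n t) s" "length as = n" "\<forall>a\<in>set as. ilc [] a"
  shows "\<exists>r. inst s r \<and> subm J (open_m 0 as t) r"
proof -
  obtain "is" r where fresh: "fresh_names n (fv_m t \<union> fv_s s) is"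
    and inst: "inst s r" and sub: "subm J (open_names is t) r"
    using assms(1) by (auto elim: subs.cases)
  define \<theta> where "\<theta> = upds IFree is as"
  have closed: "closed_isub \<theta>"
    unfolding \<theta>_def using assms(3) by (intro closed_isub_upds) auto
  have "isub_m \<theta> (open_names is t) = open_m 0 as t"
    unfolding \<theta>_def using fresh assms(2,3) by (subst isub_open_upds) (auto simp: fresh_names_def)
  moreover have "isub_s \<theta> s = s"
    unfolding \<theta>_def using fresh by (subst isub_upds_fresh) (auto simp: fresh_names_def)
  ultimately show ?thesis
    using inst_isub[OF closed inst] subm_isub(1)[OF sub closed] by auto
qed

lemma ix_le_upds_self:
  assumes "\<forall>j\<in>U. ix_le J (\<theta>1 j) (\<theta>2 j)" "V \<subseteq> U \<union> set is"
  shows "\<forall>j\<in>V. ix_le J (upds \<theta>1 is (map IFree is) j) (upds \<theta>2 is (map IFree is) j)"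
  using assms by (metis UnE ix_le_refl subsetD upds_notin upds_self)

lemma subm_mono:
  fixes r :: "('b, 'g) mty"
  assumes "weakly_monotone_interp J" "closed_isub \<theta>" "closed_isub \<theta>'"
    and "\<forall>j\<in>fpv_m r. ix_le J (\<theta> j) (\<theta>' j)" "\<forall>j\<in>fnv_m r. ix_le J (\<theta>' j) (\<theta> j)"
  shows "subm J (isub_m \<theta> r) (isub_m \<theta>' r)"
  using assms(2-)
proof (induction r arbitrary: \<theta> \<theta>' rule: measure_induct_rule[of tsize_m])
  case (less r)
  show ?case
  proof (cases r)
    case (Base B a)
    then show ?thesis
      using less.prems by (auto intro!: subm_subs.sub_base ix_le_isub_mono[OF assms(1)])
  next
    case (Prod r1 r2)
    then show ?thesis
      using less by (auto intro!: subm_subs.sub_prod)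
  next
    case (Arr s r0)
    obtain n t where s: "s = Forall n t"
      by (cases s)
    obtain "is" where fresh: "fresh_names n (fv_m t \<union> fv_m (isub_m \<theta> t) \<union> fv_m (isub_m \<theta>' t)) is"
      using fresh_names_exists finite_fv by (metis finite_UnI)
    then have "distinct is" "length is = n" "set is \<inter> fv_m t = {}"
      by (auto simp: fresh_names_def)
    define \<eta> where "\<eta> \<theta>0 = upds \<theta>0 is (map IFree is)" for \<theta>0 :: "nat \<Rightarrow> 'g ix"
    have open_\<eta>: "isub_m (\<eta> \<theta>0) (open_names is t) = open_names is (isub_m \<theta>0 t)"
      if "closed_isub \<theta>0" for \<theta>0
      unfolding \<eta>_def using that \<open>distinct is\<close> \<open>set is \<inter> fv_m t = {}\<close> by (intro isub_open_upds) auto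
    have "subm J (isub_m (\<eta> \<theta>') (open_names is t)) (isub_m (\<eta> \<theta>) (open_names is t))"
    proof (rule less.IH)
      show "tsize_m (open_names is t) < tsize_m r"
        using Arr s by simp
      show "closed_isub (\<eta> \<theta>')" "closed_isub (\<eta> \<theta>)"
        using less.prems by (simp_all add: \<eta>_def closed_isub_upds)
      show "\<forall>j\<in>fpv_m (open_names is t). ix_le J (\<eta> \<theta>' j) (\<eta> \<theta> j)"
        unfolding \<eta>_def using less.prems Arr s fpv_fnv_open(1)[of 0 "map IFree is" t]
        by (intro ix_le_upds_self) auto
      show "\<forall>j\<in>fnv_m (open_names is t). ix_le J (\<eta> \<theta> j) (\<eta> \<theta>' j)"
        unfolding \<eta>_def using less.prems Arr s fpv_fnv_open(1)[of 0 "map IFree is" t]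
        by (intro ix_le_upds_self) auto
    qed
    then have "subm J (open_names is (isub_m \<theta>' t)) (open_names is (isub_m \<theta> t))"
      using open_\<eta> less.prems by simp
    then have "subs J (isub_s \<theta>' s) (isub_s \<theta> s)"
      using fresh s \<open>length is = n\<close>
      by (auto intro!: subm_subs.sub_all inst_open_names simp: fresh_names_def)
    moreover have "subm J (isub_m \<theta> r0) (isub_m \<theta>' r0)"
      using less Arr by auto
    ultimately show ?thesis
      using Arr by (auto intro!: subm_subs.sub_arr)
  qed
qed

lemma subm_refl: "weakly_monotone_interp J \<Longrightarrow> subm J r r"
  using subm_mono[of J IFree IFree r] by (simp add: ix_le_refl)

lemma subs_trans_Forall:
  assumes trans_inst: "\<And>a bs c. subm J a (open_m 0 bs b) \<Longrightarrow> subm J (open_m 0 bs b) c \<Longrightarrow> subm J a c"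
    and "subs J (Forall n t) (Forall m b)" "subs J (Forall m b) s"
  shows "subs J (Forall n t) s"
proof -
  obtain "is" where fresh: "fresh_names n (fv_m t \<union> fv_s s) is"
    using fresh_names_exists finite_fv by (metis finite_UnI)
  then have "length is = n"
    by (simp add: fresh_names_def)
  then obtain bs where bs: "length bs = m" "\<forall>b\<in>set bs. ilc [] b"
    and sub1: "subm J (open_names is t) (open_m 0 bs b)"
    using subs_instance[OF assms(2), of "map IFree is"] by (auto simp: inst_def)
  obtain r where "inst s r" "subm J (open_m 0 bs b) r"
    using subs_instance[OF assms(3) bs] by blast
  have "subm J (open_names is t) r"
    using sub1 \<open>subm J (open_m 0 bs b) r\<close> by (rule trans_inst)
  with fresh \<open>inst s r\<close> show ?thesis
    by (intro subm_subs.sub_all) simp_all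
qed

inductive_cases subm_Base_leftE: "subm J (Base B a) r"
inductive_cases subm_Base_rightE: "subm J r (Base B b)"
inductive_cases subm_Prod_leftE: "subm J (Prod r1 r2) r"
inductive_cases subm_Prod_rightE: "subm J r (Prod r1 r2)"
inductive_cases subm_Arr_leftE: "subm J (Arr s r) r'"
inductive_cases subm_Arr_rightE: "subm J r' (Arr s r)"

lemma subm_trans: "subm J a b \<Longrightarrow> subm J b c \<Longrightarrow> subm J a c"
proof (induction b arbitrary: a c rule: measure_induct_rule[of tsize_m])
  case (less b)
  show ?case
  proof (cases b)
    case (Base B x)
    then show ?thesis
      using less.prems
      by (auto elim!: subm_Base_leftE subm_Base_rightE intro!: subm_subs.sub_base intro: ix_le_trans)
  next
    case (Prod b1 b2)
    obtain a1 a2 where a: "a = Prod a1 a2" "subm J a1 b1" "subm J a2 b2"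
      using less.prems(1) Prod by (auto elim: subm_Prod_rightE)
    obtain c1 c2 where c: "c = Prod c1 c2" "subm J b1 c1" "subm J b2 c2"
      using less.prems(2) Prod by (auto elim: subm_Prod_leftE)
    have "subm J a1 c1" "subm J a2 c2"
      using less.IH[of b1 a1 c1] less.IH[of b2 a2 c2] a c Prod by simp_all
    then show ?thesis
      using a c by (auto intro: subm_subs.sub_prod)
  next
    case (Arr s r)
    obtain m t where s: "s = Forall m t"
      by (cases s)
    obtain sa ra where a: "a = Arr sa ra" "subs J s sa" "subm J ra r"
      using less.prems(1) Arr by (auto elim: subm_Arr_rightE)
    obtain sc rc where c: "c = Arr sc rc" "subs J sc s" "subm J r rc"
      using less.prems(2) Arr by (auto elim: subm_Arr_leftE)
    obtain k u where sc: "sc = Forall k u"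
      by (cases sc)
    have "subs J sc sa"
      using c(2) a(2) unfolding s sc
    proof (rule subs_trans_Forall[rotated])
      fix x bs y
      show "subm J x (open_m 0 bs t) \<Longrightarrow> subm J (open_m 0 bs t) y \<Longrightarrow> subm J x y"
        using less.IH[of "open_m 0 bs t" x y] Arr s by simp
    qed
    moreover have "subm J ra rc"
      using less.IH[of r ra rc] a(3) c(3) Arr by simp
    ultimately show ?thesis
      using a c by (auto intro: subm_subs.sub_arr)
  qed
qed

lemma subm_isub_Arr_instance:
  assumes "subm J (isub_m \<theta> \<tau>) (Arr (Forall n t) r)" "length is = n"
  shows "\<exists>m \<rho>1 r1 bs. \<tau> = Arr (Forall m \<rho>1) r1 \<and> length bs = m \<and> (\<forall>b\<in>set bs. ilc [] b)
     \<and> subm J (open_names is t) (open_m 0 bs (isub_m \<theta> \<rho>1)) \<and> subm J (isub_m \<theta> r1) r"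
proof -
  obtain s1 r1 where \<tau>: "\<tau> = Arr s1 r1" and "subs J (Forall n t) (isub_s \<theta> s1)"
    and "subm J (isub_m \<theta> r1) r"
    using assms(1) by (auto elim!: subm_Arr_rightE dest!: isub_m_eq_Arr)
  moreover obtain m \<rho>1 where "s1 = Forall m \<rho>1"
    by (cases s1)
  ultimately show ?thesis
    using subs_instance[of J n t "isub_s \<theta> s1" "map IFree is"] assms(2) by (auto simp: inst_def)
qed

lemma subm_isub_subst_pos:
  assumes "weakly_monotone_interp J" "closed_isub \<theta>" "closed_isub \<theta>'" "ilc [] a"
    and "i \<notin> fnv_m r" "\<forall>j\<in>fv_m r - {i}. \<theta> j = \<theta>' j" "ix_le J (isub \<theta> a) (\<theta>' i)"
  shows "subm J (isub_m \<theta> (isub_m (IFree(i := a)) r)) (isub_m \<theta>' r)"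
proof -
  have "isub_m \<theta> (isub_m (IFree(i := a)) r) = isub_m (\<theta>'(i := isub \<theta> a)) r"
    unfolding isub_isub_m using assms(6) by (intro isub_cong_m) auto
  moreover have closed: "closed_isub (\<theta>'(i := isub \<theta> a))"
    using assms(2-4) by (auto simp: closed_isub_def ilc_isub)
  ultimately show ?thesis
    using subm_mono[OF assms(1) closed assms(3), of r] assms(5,7)
    by (auto simp: ix_le_refl fv_m_def)
qed

section \<open>Typing inversion and application spines\<close>

lemma sized_typ_Sym_inv:
  assumes "sized_typ decl J \<Gamma> t r" "t = Sym h" "weakly_monotone_interp J"
  shows "\<exists>r0. inst (decl h) r0 \<and> subm J r0 r"
  using assms(1,2)
proof (induction rule: sized_typ.induct)
  case (T_Fun f r \<Gamma>)
  then show ?case using subm_refl[OF assms(3)] by blast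
next
  case (T_Sub \<Gamma> t r1 r)
  then show ?case using subm_trans by blast
qed auto

lemma sized_typ_App_inv:
  assumes "sized_typ decl J \<Gamma> t' r" "t' = App t u" "weakly_monotone_interp J"
  shows "\<exists>n t1 r' t2 is. sized_typ decl J \<Gamma> t (Arr (Forall n t1) r') \<and> sized_typ decl J \<Gamma> u t2
     \<and> fresh_names n (fv_s (Forall n t1) \<union> ctx_fv (\<Gamma> |` tfv u)) is
     \<and> subm J t2 (open_names is t1) \<and> subm J r' r"
  using assms(1,2)
proof (induction rule: sized_typ.induct)
  case (T_App \<Gamma> t n t1 r u t2 "is")
  then show ?case using subm_refl[OF assms(3)] by blast
next
  case (T_Sub \<Gamma> t r1 r)
  then show ?case using subm_trans by meson
qed auto

lemma apps_Nil [simp]: "apps h [] = h"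
  by (simp add: apps_def)

lemma apps_snoc [simp]: "apps h (qs @ [p]) = App (apps h qs) p"
  by (simp add: apps_def)

lemma apps_eq_Sym: "apps (Sym h) qs = Sym h' \<Longrightarrow> qs = [] \<and> h = h'"
  by (cases qs rule: rev_cases) auto

lemma apps_eq_App: "apps (Sym h) qs = App t p \<Longrightarrow> \<exists>qs'. qs = qs' @ [p] \<and> t = apps (Sym h) qs'"
  by (cases qs rule: rev_cases) auto

lemma apps_neq:
  "apps (Sym h) qs \<noteq> Var x" "apps (Sym h) qs \<noteq> Pair t u" "apps (Sym h) qs \<noteq> Let x y t u"
  by (cases qs rule: rev_cases; simp)+

lemma apps_not_var: "\<not> is_var (apps (Sym h) qs)"
  by (cases qs rule: rev_cases) auto

lemma tfv_subset_var_occs: "tfv t \<subseteq> set (var_occs t)"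
  by (induction t) auto

lemma ctx_fv_subset: "\<forall>x s. \<Gamma> x = Some s \<longrightarrow> fv_s s \<subseteq> N \<Longrightarrow> ctx_fv \<Gamma> \<subseteq> N"
  by (auto simp: ctx_fv_def ran_def)

fun s_cod :: "'b stype \<Rightarrow> 'b stype" where
  "s_cod (SArr _ t) = t"
| "s_cod t = t"

lemma funpow_s_cod_arity: "(s_cod ^^ s_arity s) s = s_result s"
proof (induction s)
  case (SArr s1 s2)
  then show ?case by (simp add: funpow_Suc_right del: funpow.simps)
qed auto

lemma fp_skel:
  "fp decl \<Gamma> t \<tau> \<Longrightarrow> t = apps (Sym h) qs \<Longrightarrow> skel_m \<tau> = (s_cod ^^ length qs) (skel_s (decl h))"
proof (induction arbitrary: qs rule: fp.induct)
  case (Fp_Fun f n r "is")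
  then show ?case using apps_eq_Sym[of h qs f] by auto
next
  case (Fp_AppVar \<Gamma> s \<sigma> r x)
  then obtain qs' where "qs = qs' @ [Var x]" "skel_m (Arr \<sigma> r) = (s_cod ^^ length qs') (skel_s (decl h))"
    by (metis apps_eq_App)
  then show ?case
    by (metis funpow.simps(2) length_append_singleton o_apply s_cod.simps(1) skel_m.simps(3))
next
  case (Fp_AppNVar \<Gamma>1 s B i r \<Gamma>2 u a)
  then obtain qs' where "qs = qs' @ [u]" "skel_m (Arr (Mono (Base B (IFree i))) r) = (s_cod ^^ length qs') (skel_s (decl h))"
    by (metis apps_eq_App)
  then show ?case
    by (metis funpow.simps(2) length_append_singleton o_apply s_cod.simps(1) skel_isub(1) skel_m.simps(3))
qed

section \<open>Canonical spines\<close>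

text \<open>The part of canonicity that survives in footprint types (see \<open>fp_spine_ok\<close>).\<close>
fun spine_ok :: "('b, 'g) mty \<Rightarrow> bool" where
  "spine_ok (Arr (Forall n r0) r) \<longleftrightarrow>
     (\<forall>B. skel_m r0 = SBase B \<longrightarrow> (\<exists>i. n = 0 \<and> r0 = Base B (IFree i) \<and> i \<notin> fnv_m r))
     \<and> spine_ok r"
| "spine_ok _ \<longleftrightarrow> True"

lemma spine_ok_Arr: "spine_ok (Arr s r) \<Longrightarrow> spine_ok r"
  by (cases s) simp

lemma canon_spine_ok: "canon_m r \<Longrightarrow> spine_ok r"
  by (induction rule: canon_m_canon_s.inducts(1)[where ?P2.0 = "\<lambda>_. True"])
     (auto, (case_tac p; simp)+)

lemma spine_ok_rename:
  assumes "spine_ok r" "\<forall>j\<in>fv_m r. \<exists>k. \<theta> j = IFree k" "inj_on \<theta> (fv_m r)"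
  shows "spine_ok (isub_m \<theta> r)"
  using assms
proof (induction r rule: spine_ok.induct)
  case (1 n r0 r)
  have "\<exists>j. n = 0 \<and> isub_m \<theta> r0 = Base B (IFree j) \<and> j \<notin> fnv_m (isub_m \<theta> r)"
    if skel: "skel_m (isub_m \<theta> r0) = SBase B" for B
  proof -
    obtain i where i: "n = 0" "r0 = Base B (IFree i)" "i \<notin> fnv_m r"
      using 1(2) skel by auto
    obtain k where k: "\<theta> i = IFree k"
      using 1(3) i by auto
    have "k \<notin> ifv (\<theta> j)" if "j \<in> fnv_m r" for j
    proof
      assume "k \<in> ifv (\<theta> j)"
      moreover obtain k' where "\<theta> j = IFree k'"
        using 1(3) \<open>j \<in> fnv_m r\<close> by (auto simp: fv_m_def)
      ultimately have "\<theta> j = \<theta> i"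
        using k by simp
      then have "j = i"
        using 1(4) i \<open>j \<in> fnv_m r\<close> unfolding inj_on_def by (simp add: fv_m_def)
      then show False
        using i \<open>j \<in> fnv_m r\<close> by simp
    qed
    then show ?thesis
      using i k by (auto simp: fpv_fnv_isub)
  qed
  moreover have "spine_ok (isub_m \<theta> r)"
    using 1 by (auto intro: inj_on_subset)
  ultimately show ?case
    by simp
qed auto

lemma spine_ok_subst:
  assumes "spine_ok r" "i \<notin> fnv_m r"
  shows "spine_ok (isub_m (IFree(i := a)) r)"
  using assms
proof (induction r rule: spine_ok.induct)
  case (1 n r0 r)
  then show ?case
    by (auto simp: fpv_fnv_isub split: if_splits)
qed auto

inductive_cases canon_s_ForallE: "canon_s (Forall n r)"

lemma fp_spine_ok:
  fixes decl :: "('f, 'c) symb \<Rightarrow> ('b, 'g) sty"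
  assumes "fp decl \<Gamma> t \<tau>" "\<forall>f. closed_s (decl f) \<and> canon_s (decl f)"
  shows "spine_ok \<tau>"
  using assms(1)
proof (induction rule: fp.induct)
  case (Fp_Fun f n r "is")
  then have "canon_s (Forall n r)" and closed: "fv_m r = {}"
    using assms(2) by (metis, metis closed_s_def fv_simps(4))
  then obtain is1 where fresh1: "fresh_names n (fv_m r) is1" and "canon_m (open_names is1 r)"
    by (auto elim: canon_s_ForallE)
  then have spine1: "spine_ok (open_names is1 r)"
    by (simp add: canon_spine_ok)
  define \<theta> :: "nat \<Rightarrow> 'g ix" where "\<theta> = upds IFree is1 (map IFree is)"
  have "isub_m \<theta> (open_names is1 r) = open_names is r"
    unfolding \<theta>_def using fresh1 Fp_Fun.hyps(2) closed
    by (subst isub_open_upds) (auto simp: fresh_names_def)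
  moreover have "spine_ok (isub_m \<theta> (open_names is1 r))"
  proof (rule spine_ok_rename[OF spine1])
    have "fv_m (open_names is1 r) \<subseteq> set is1"
      using fv_open_names[of is1 r] closed by simp
    moreover have "inj_on \<theta> (set is1)"
      unfolding \<theta>_def using fresh1 Fp_Fun.hyps(2)
      by (intro upds_rename_inj) (auto simp: fresh_names_def)
    ultimately show "inj_on \<theta> (fv_m (open_names is1 r))"
      by (rule inj_on_subset[rotated])
    show "\<forall>j\<in>fv_m (open_names is1 r). \<exists>k. \<theta> j = IFree k"
      unfolding \<theta>_def using upds_cases[of IFree is1 "map IFree is"] by auto
  qed
  ultimately show ?case
    by simp
next
  case (Fp_AppNVar \<Gamma>1 s B i r \<Gamma>2 u a)
  then show ?case
    by (simp add: spine_ok_subst)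
qed (auto intro: spine_ok_Arr)

section \<open>Footprints of instances\<close>

text \<open>
  \<open>footprint_match decl J \<sigma> t \<rho> N \<Gamma> \<tau> \<theta>\<close> states the conclusion of the theorem for \<open>t\<close>:
  \<open>\<Gamma> \<turnstile>\<^sub>F\<^sub>P t : \<tau>\<close>, \<open>\<tau>\<theta> \<sqsubseteq> \<rho>\<close>, and for each \<open>x : \<forall>is. \<rho>\<^sub>x\<close> in \<open>\<Gamma>\<close> a typing \<open>\<turnstile> \<sigma> x : \<rho>\<^sub>x\<theta>\<close>, where
  the bound variables of the scheme are named by fresh \<open>is\<close>.  All index names occurring
  in \<open>\<Gamma>\<close> and \<open>\<tau>\<close> or chosen for these schemes lie in \<open>N\<close>; only \<open>\<theta>\<close> on \<open>N\<close> matters.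
\<close>

definition matched_binding ::
    "(('f, 'c) symb \<Rightarrow> ('b, 'g) sty) \<Rightarrow> ('g \<Rightarrow> nat list \<Rightarrow> nat) \<Rightarrow> (nat \<Rightarrow> 'g ix) \<Rightarrow> nat set
       \<Rightarrow> ('v, 'f, 'c) trm \<Rightarrow> ('b, 'g) sty \<Rightarrow> bool" where
  "matched_binding decl J \<theta> N u s \<longleftrightarrow> wf_s s \<and> lc_s [] s \<and> fv_s s \<subseteq> N \<and>
     (case s of Forall n r \<Rightarrow> \<exists>is. fresh_names n (fv_m r) is \<and> set is \<subseteq> N
        \<and> sized_typ decl J Map.empty u (isub_m \<theta> (open_names is r)))"

definition footprint_match ::
    "(('f, 'c) symb \<Rightarrow> ('b, 'g) sty) \<Rightarrow> ('g \<Rightarrow> nat list \<Rightarrow> nat) \<Rightarrow> ('v \<Rightarrow> ('v, 'f, 'c) trm)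
       \<Rightarrow> ('v, 'f, 'c) trm \<Rightarrow> ('b, 'g) mty \<Rightarrow> nat set \<Rightarrow> ('v, 'b, 'g) ctx \<Rightarrow> ('b, 'g) mty
       \<Rightarrow> (nat \<Rightarrow> 'g ix) \<Rightarrow> bool" where
  "footprint_match decl J \<sigma> t \<rho> N \<Gamma> \<tau> \<theta> \<longleftrightarrow>
     fp decl \<Gamma> t \<tau> \<and> dom \<Gamma> = tfv t \<and> (\<forall>x s. \<Gamma> x = Some s \<longrightarrow> matched_binding decl J \<theta> N (\<sigma> x) s)
     \<and> wf_m \<tau> \<and> lc_m [] \<tau> \<and> fv_m \<tau> \<subseteq> N \<and> closed_isub \<theta> \<and> subm J (isub_m \<theta> \<tau>) \<rho>"

lemma matched_binding_mono:
  assumes "matched_binding decl J \<theta> N u s" "\<forall>j\<in>N. \<theta>' j = \<theta> j" "N \<subseteq> N'"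
  shows "matched_binding decl J \<theta>' N' u s"
proof (cases s)
  case (Forall n r)
  then obtain "is" where "fresh_names n (fv_m r) is" "set is \<subseteq> N"
    and typed: "sized_typ decl J Map.empty u (isub_m \<theta> (open_names is r))"
    using assms(1) by (auto simp: matched_binding_def)
  moreover have "isub_m \<theta>' (open_names is r) = isub_m \<theta> (open_names is r)"
    using assms(1,2) Forall fv_open_names[of "is" r] \<open>set is \<subseteq> N\<close>
    by (intro isub_cong_m) (auto simp: matched_binding_def)
  ultimately have "\<exists>is. fresh_names n (fv_m r) is \<and> set is \<subseteq> N'
      \<and> sized_typ decl J Map.empty u (isub_m \<theta>' (open_names is r))"
    using assms(3) by (intro exI[of _ "is"]) auto
  then show ?thesis
    using assms(1,3) Forall by (auto simp: matched_binding_def)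
qed

lemma footprint_match_Sym:
  assumes "weakly_monotone_interp J" "closed_s (decl h)" "wf_s (decl h)"
    and "sized_typ decl J Map.empty (Sym h) \<rho>" "finite S"
  shows "\<exists>N \<Gamma> \<tau> \<theta>. finite N \<and> N \<inter> S = {} \<and> footprint_match decl J \<sigma> (Sym h) \<rho> N \<Gamma> \<tau> \<theta>"
proof -
  obtain r0 where inst: "inst (decl h) r0" and sub: "subm J r0 \<rho>"
    using sized_typ_Sym_inv[OF assms(4) refl assms(1)] by blast
  obtain n body where decl: "decl h = Forall n body"
    by (cases "decl h")
  obtain as where as: "length as = n" "\<forall>a\<in>set as. ilc [] a" "r0 = open_m 0 as body"
    using inst decl by (auto simp: inst_def)
  have body: "fv_m body = {}" "lc_m [n] body" "wf_m body"
    using assms(2,3) decl by (auto simp: closed_s_def)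
  obtain "is" where fresh: "fresh_names n S is"
    using fresh_names_exists assms(5) by blast
  define \<tau> where "\<tau> = open_names is body"
  define \<theta> where "\<theta> = upds IFree is as"
  have "isub_m \<theta> \<tau> = r0"
    unfolding \<theta>_def \<tau>_def using fresh as body by (subst isub_open_upds) (auto simp: fresh_names_def)
  moreover have "fp decl Map.empty (Sym h) \<tau>"
    unfolding \<tau>_def using decl fresh body by (intro fp.Fp_Fun) (auto simp: fresh_names_def)
  moreover have "lc_m [] \<tau>"
    unfolding \<tau>_def using lc_open(1)[of "[]" n body 0 "map IFree is"] body fresh
    by (simp add: fresh_names_def)
  moreover have "fv_m \<tau> \<subseteq> set is"
    unfolding \<tau>_def using fv_open_names[of "is" body] body by simp
  moreover have "closed_isub \<theta>"
    unfolding \<theta>_def using as by (intro closed_isub_upds) auto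
  ultimately have "footprint_match decl J \<sigma> (Sym h) \<rho> (set is) Map.empty \<tau> \<theta>"
    using sub body by (simp add: footprint_match_def \<tau>_def)
  then show ?thesis
    using fresh by (auto simp: fresh_names_def)
qed

lemma footprint_match_AppVar:
  assumes M: "footprint_match decl J \<sigma> t \<rho>' N1 \<Gamma>1 (Arr (Forall m \<rho>1) r1) \<theta>1"
    and x: "x \<notin> tfv t"
    and bs: "length bs = m" "\<forall>b\<in>set bs. ilc [] b"
    and typed: "sized_typ decl J Map.empty (\<sigma> x) (open_m 0 bs (isub_m \<theta>1 \<rho>1))"
    and sub: "subm J (isub_m \<theta>1 r1) \<rho>"
    and N1: "finite N1" "N1 \<inter> S = {}" and "finite S"
  shows "\<exists>N \<theta>. finite N \<and> N \<inter> S = {}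
           \<and> footprint_match decl J \<sigma> (App t (Var x)) \<rho> N (\<Gamma>1(x \<mapsto> Forall m \<rho>1)) r1 \<theta>"
proof -
  from M have fp1: "fp decl \<Gamma>1 t (Arr (Forall m \<rho>1) r1)" and dom1: "dom \<Gamma>1 = tfv t"
    and bind1: "\<forall>y s. \<Gamma>1 y = Some s \<longrightarrow> matched_binding decl J \<theta>1 N1 (\<sigma> y) s"
    and wf1: "wf_s (Forall m \<rho>1)" "wf_m r1" and lc1: "lc_s [] (Forall m \<rho>1)" "lc_m [] r1"
    and fv1: "fv_m \<rho>1 \<subseteq> N1" "fv_m r1 \<subseteq> N1" and closed1: "closed_isub \<theta>1"
    by (simp_all add: footprint_match_def)
  obtain "is" where fresh: "fresh_names m (fv_m \<rho>1 \<union> N1 \<union> S) is"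
    using fresh_names_exists finite_fv N1 \<open>finite S\<close> by (metis finite_UnI)
  then have is_N1: "set is \<inter> N1 = {}" and is_S: "set is \<inter> S = {}"
    by (auto simp: fresh_names_def)
  define \<theta> where "\<theta> = upds \<theta>1 is bs"
  define N where "N = N1 \<union> set is"
  have closed: "closed_isub \<theta>"
    unfolding \<theta>_def using closed1 bs by (intro closed_isub_upds) auto
  have agree: "\<forall>j\<in>N1. \<theta> j = \<theta>1 j"
    unfolding \<theta>_def using is_N1 upds_notin by blast
  have "isub_m \<theta> (open_names is \<rho>1) = open_m 0 bs (isub_m \<theta>1 \<rho>1)"
    unfolding \<theta>_def using closed1 fresh bs by (subst isub_open_upds) (auto simp: fresh_names_def)
  then have "matched_binding decl J \<theta> N (\<sigma> x) (Forall m \<rho>1)"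
    using wf1 lc1 fv1 fresh typed by (auto simp: matched_binding_def N_def fresh_names_def)
  moreover have "matched_binding decl J \<theta> N (\<sigma> y) s" if "\<Gamma>1 y = Some s" for y s
    using matched_binding_mono[of decl J \<theta>1 N1 "\<sigma> y" s \<theta> N] bind1 that agree by (auto simp: N_def)
  ultimately have "\<forall>y s. (\<Gamma>1(x \<mapsto> Forall m \<rho>1)) y = Some s \<longrightarrow> matched_binding decl J \<theta> N (\<sigma> y) s"
    by simp
  moreover have "fp decl (\<Gamma>1(x \<mapsto> Forall m \<rho>1)) (App t (Var x)) r1"
    using fp1 dom1 x by (intro fp.Fp_AppVar) auto
  moreover have "isub_m \<theta> r1 = isub_m \<theta>1 r1"
    using fv1 agree by (intro isub_cong_m) auto
  ultimately have "footprint_match decl J \<sigma> (App t (Var x)) \<rho> N (\<Gamma>1(x \<mapsto> Forall m \<rho>1)) r1 \<theta>"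
    using dom1 wf1 lc1 fv1 closed sub by (auto simp: footprint_match_def N_def)
  then show ?thesis
    using N1 is_S by (auto simp: N_def)
qed

lemma footprint_match_AppNVar:
  assumes J: "weakly_monotone_interp J"
    and M1: "footprint_match decl J \<sigma> t \<rho>' N1 \<Gamma>1 (Arr (Mono (Base B (IFree i))) r1) \<theta>1"
    and pos: "i \<notin> fnv_m r1" and sub: "subm J (isub_m \<theta>1 r1) \<rho>"
    and M2: "footprint_match decl J \<sigma> p (Base B (\<theta>1 i)) N2 \<Gamma>2 (Base B a) \<theta>2"
    and disj: "N1 \<inter> N2 = {}" "tfv t \<inter> tfv p = {}" and p: "\<not> is_var p"
  shows "footprint_match decl J \<sigma> (App t p) \<rho> (N1 \<union> N2) (\<Gamma>1 ++ \<Gamma>2)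
           (isub_m (IFree(i := a)) r1) (\<lambda>j. if j \<in> N1 then \<theta>1 j else \<theta>2 j)"
    (is "footprint_match _ _ _ _ _ _ _ ?\<tau> ?\<theta>")
proof -
  from M1 have fp1: "fp decl \<Gamma>1 t (Arr (Mono (Base B (IFree i))) r1)" and dom1: "dom \<Gamma>1 = tfv t"
    and bind1: "\<forall>y s. \<Gamma>1 y = Some s \<longrightarrow> matched_binding decl J \<theta>1 N1 (\<sigma> y) s"
    and r1: "wf_m r1" "lc_m [] r1" "fv_m r1 \<subseteq> N1" and closed1: "closed_isub \<theta>1"
    by (simp_all add: footprint_match_def)
  from M2 have fp2: "fp decl \<Gamma>2 p (Base B a)" and dom2: "dom \<Gamma>2 = tfv p"
    and bind2: "\<forall>y s. \<Gamma>2 y = Some s \<longrightarrow> matched_binding decl J \<theta>2 N2 (\<sigma> y) s"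
    and a: "ilc [] a" "ifv a \<subseteq> N2" and closed2: "closed_isub \<theta>2"
    and le: "ix_le J (isub \<theta>2 a) (\<theta>1 i)"
    by (auto simp: footprint_match_def elim: subm_Base_leftE)
  have agree1: "\<forall>j\<in>N1. ?\<theta> j = \<theta>1 j" and agree2: "\<forall>j\<in>N2. ?\<theta> j = \<theta>2 j"
    using disj by auto
  have closed: "closed_isub ?\<theta>" and closed_a: "closed_isub (IFree(i := a))"
    using closed1 closed2 a by (auto simp: closed_isub_def)
  have "ctx_fv \<Gamma>1 \<subseteq> N1" "ctx_fv \<Gamma>2 \<subseteq> N2"
    using bind1 bind2 unfolding matched_binding_def by (intro ctx_fv_subset; blast)+
  then have "fp decl (\<Gamma>1 ++ \<Gamma>2) (App t p) ?\<tau>"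
    using fp1 fp2 dom1 dom2 r1 a disj p by (intro fp.Fp_AppNVar) auto
  moreover have "matched_binding decl J ?\<theta> (N1 \<union> N2) (\<sigma> y) s" if "(\<Gamma>1 ++ \<Gamma>2) y = Some s" for y s
    using that bind1 bind2 agree1 agree2
      matched_binding_mono[of decl J \<theta>1 N1 "\<sigma> y" s ?\<theta> "N1 \<union> N2"]
      matched_binding_mono[of decl J \<theta>2 N2 "\<sigma> y" s ?\<theta> "N1 \<union> N2"]
    by (auto simp: map_add_Some_iff)
  moreover have "fv_m ?\<tau> \<subseteq> N1 \<union> N2"
    using r1 a by (auto simp: fv_isub split: if_splits)
  moreover have "isub ?\<theta> a = isub \<theta>2 a"
    using a disj by (intro isub_cong) auto
  \<comment> \<open>\<open>i\<close> occurs only positively in \<open>r1\<close>, so lowering \<open>\<theta>1 i\<close> to \<open>a\<theta>\<close> lowers the type\<close>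
  then have "subm J (isub_m ?\<theta> ?\<tau>) (isub_m \<theta>1 r1)"
    using a r1 pos le by (intro subm_isub_subst_pos[OF J closed closed1]) auto
  ultimately show ?thesis
    using dom1 dom2 r1 closed closed_a sub
    by (auto simp: footprint_match_def lc_isub intro: subm_trans)
qed

lemma footprint_match_base_argument:
  assumes "spine_ok (Arr (Forall m \<rho>1) r1)" "closed_isub \<theta>1"
    and M: "footprint_match decl J \<sigma> p (open_m 0 bs (isub_m \<theta>1 \<rho>1)) N \<Gamma> \<tau> \<theta>"
    and "skel_m \<tau> = SBase B"
  obtains i a where "m = 0" "\<rho>1 = Base B (IFree i)" "i \<notin> fnv_m r1" "\<tau> = Base B a"
    "footprint_match decl J \<sigma> p (Base B (\<theta>1 i)) N \<Gamma> (Base B a) \<theta>"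
proof -
  obtain a where \<tau>: "\<tau> = Base B a"
    using assms(4) by (metis skel_eq_SBase)
  then obtain b where "open_m 0 bs (isub_m \<theta>1 \<rho>1) = Base B b"
    using M by (auto simp: footprint_match_def elim!: subm_Base_leftE)
  then obtain i where i: "m = 0" "\<rho>1 = Base B (IFree i)" "i \<notin> fnv_m r1"
    using assms(1) by (cases \<rho>1) auto
  then have "open_m 0 bs (isub_m \<theta>1 \<rho>1) = Base B (\<theta>1 i)"
    using assms(2) by (simp add: closed_isub_def iopen_closed)
  then show ?thesis
    using that i \<tau> M by simp
qed

lemma footprint_match_exists:
  assumes J: "weakly_monotone_interp J"
    and decl_ok: "\<forall>s. closed_s (decl s) \<and> wf_s (decl s) \<and> canon_s (decl s) \<and> skel_s (decl s) = styp s"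
  shows "\<lbrakk> t = apps (Sym h) qs; \<forall>p\<in>set qs. is_pat styp p; distinct (var_occs t);
           sized_typ decl J Map.empty (tsubst \<sigma> t) \<rho>; finite S \<rbrakk>
         \<Longrightarrow> \<exists>N \<Gamma> \<tau> \<theta>. finite N \<and> N \<inter> S = {} \<and> footprint_match decl J \<sigma> t \<rho> N \<Gamma> \<tau> \<theta>"
proof (induction t arbitrary: h qs \<rho> S)
  case (Sym h')
  then show ?case
    using footprint_match_Sym[OF J] decl_ok apps_eq_Sym by (metis tsubst.simps(2))
next
  case (App t p)
  obtain qs' where qs: "qs = qs' @ [p]" and t: "t = apps (Sym h) qs'"
    using apps_eq_App App.prems(1) by metis
  have pats: "\<forall>q\<in>set qs'. is_pat styp q" and "is_pat styp p"
    using App.prems(2) qs by auto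
  have lin: "distinct (var_occs t)" "distinct (var_occs p)" and disj: "tfv t \<inter> tfv p = {}"
    using App.prems(3) tfv_subset_var_occs[of t] tfv_subset_var_occs[of p] by auto
  obtain n t1 r' t2 "is" where typed_t: "sized_typ decl J Map.empty (tsubst \<sigma> t) (Arr (Forall n t1) r')"
    and typed_p: "sized_typ decl J Map.empty (tsubst \<sigma> p) t2" and "length is = n"
    and sub_p: "subm J t2 (open_names is t1)" and sub_r: "subm J r' \<rho>"
    using sized_typ_App_inv[OF App.prems(4)[simplified] refl J] by (auto simp: fresh_names_def)
  obtain N1 \<Gamma>1 \<tau>1 \<theta>1 where N1: "finite N1" "N1 \<inter> S = {}"
    and M1: "footprint_match decl J \<sigma> t (Arr (Forall n t1) r') N1 \<Gamma>1 \<tau>1 \<theta>1"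
    using App.IH(1)[OF t pats lin(1) typed_t App.prems(5)] by blast
  then obtain m \<rho>1 r1 bs where \<tau>1: "\<tau>1 = Arr (Forall m \<rho>1) r1"
    and bs: "length bs = m" "\<forall>b\<in>set bs. ilc [] b"
    and "subm J (open_names is t1) (open_m 0 bs (isub_m \<theta>1 \<rho>1))" "subm J (isub_m \<theta>1 r1) r'"
    using subm_isub_Arr_instance[of J \<theta>1 \<tau>1 n t1 r' "is"] \<open>length is = n\<close>
    by (auto simp: footprint_match_def)
  then have typed_p': "sized_typ decl J Map.empty (tsubst \<sigma> p) (open_m 0 bs (isub_m \<theta>1 \<rho>1))"
    and sub: "subm J (isub_m \<theta>1 r1) \<rho>"
    using typed_p sub_p sub_r by (auto intro: sized_typ.T_Sub subm_trans)
  from \<open>is_pat styp p\<close> show ?case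
  proof cases
    case (pat_var x)
    then have "x \<notin> tfv t"
      using disj by auto
    from footprint_match_AppVar[OF M1[unfolded \<tau>1] this bs _ sub N1 App.prems(5)] typed_p'
    show ?thesis
      using pat_var by (simp, blast)
  next
    case (pat_con c B ps)
    \<comment> \<open>the footprint of \<open>p\<close> avoids \<open>N1\<close>, so that \<open>\<theta>1\<close> and \<open>\<theta>2\<close> can be merged\<close>
    have fin: "finite (S \<union> N1)"
      using App.prems(5) N1(1) by simp
    obtain N2 \<Gamma>2 \<tau>2 \<theta>2 where N2: "finite N2" "N2 \<inter> (S \<union> N1) = {}"
      and M2: "footprint_match decl J \<sigma> p (open_m 0 bs (isub_m \<theta>1 \<rho>1)) N2 \<Gamma>2 \<tau>2 \<theta>2"
      using App.IH(2)[OF pat_con(1) pat_con(4) lin(2) typed_p' fin] by blast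
    have skel: "skel_m \<tau>2 = SBase B"
      using fp_skel[of decl \<Gamma>2 p \<tau>2 "Cn c" ps] M2 decl_ok pat_con(1-3)
      by (simp add: footprint_match_def funpow_s_cod_arity)
    from M1 have "fp decl \<Gamma>1 t \<tau>1" and closed1: "closed_isub \<theta>1"
      by (simp_all add: footprint_match_def)
    then have "spine_ok \<tau>1"
      using fp_spine_ok decl_ok by blast
    then obtain i a where i: "m = 0" "\<rho>1 = Base B (IFree i)" "i \<notin> fnv_m r1"
      and M2': "footprint_match decl J \<sigma> p (Base B (\<theta>1 i)) N2 \<Gamma>2 (Base B a) \<theta>2"
      using footprint_match_base_argument[OF _ closed1 M2 skel] \<tau>1 by blast
    moreover have "N1 \<inter> N2 = {}" "\<not> is_var p"
      using N2 pat_con(1) apps_not_var by auto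
    ultimately have "footprint_match decl J \<sigma> (App t p) \<rho> (N1 \<union> N2) (\<Gamma>1 ++ \<Gamma>2)
        (isub_m (IFree(i := a)) r1) (\<lambda>j. if j \<in> N1 then \<theta>1 j else \<theta>2 j)"
      using footprint_match_AppNVar[OF J, of decl \<sigma> t _ N1 \<Gamma>1 B i r1 \<theta>1 \<rho> p N2 \<Gamma>2 a \<theta>2]
        M1 M2' \<tau>1 i sub disj by simp
    moreover have "finite (N1 \<union> N2)" "(N1 \<union> N2) \<inter> S = {}"
      using N1 N2 by auto
    ultimately show ?thesis
      by blast
  qed
qed (metis apps_neq)+

lemma footprint_match_binding:
  assumes "footprint_match decl J \<sigma> t \<rho> N \<Gamma> \<tau> \<theta>" "x \<in> tfv t"
  shows "\<exists>n \<rho>x is. \<Gamma> x = Some (Forall n \<rho>x) \<and> fresh_names n (fv_s (Forall n \<rho>x)) is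
           \<and> sized_typ decl J Map.empty (\<sigma> x) (isub_m \<theta> (open_names is \<rho>x))"
proof -
  obtain s where "\<Gamma> x = Some s"
    using assms unfolding footprint_match_def by blast
  moreover obtain n \<rho>x where "s = Forall n \<rho>x"
    by (cases s)
  ultimately have "\<Gamma> x = Some (Forall n \<rho>x)" "matched_binding decl J \<theta> N (\<sigma> x) (Forall n \<rho>x)"
    using assms(1) by (simp_all add: footprint_match_def)
  then show ?thesis
    unfolding matched_binding_def by auto
qed

theorem mainTheorem7:
  fixes decl :: "('f, 'c) symb \<Rightarrow> ('b, 'g) sty"
    and styp :: "('f, 'c) symb \<Rightarrow> 'b stype"
    and J :: "'g \<Rightarrow> nat list \<Rightarrow> nat"
    and f :: 'f
    and ps :: "('v, 'f, 'c) trm list"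
    and \<sigma> :: "'v \<Rightarrow> ('v, 'f, 'c) trm"
    and \<rho> :: "('b, 'g) mty"
  assumes J_mono: "weakly_monotone_interp J"
    and decl_ok: "\<forall>s. closed_s (decl s) \<and> wf_s (decl s) \<and> canon_s (decl s)
                      \<and> skel_s (decl s) = styp s"
    and pats: "\<forall>p\<in>set ps. is_pat styp p"
    and lin: "linear (apps (Sym (Fn f)) ps)"
    and rho_ok: "wf_m \<rho>" "lc_m [] \<rho>"
    and typed: "sized_typ decl J Map.empty (tsubst \<sigma> (apps (Sym (Fn f)) ps)) \<rho>"
  shows "\<exists>\<Gamma> \<tau> \<theta>.
           dom \<Gamma> = tfv (apps (Sym (Fn f)) ps)
         \<and> (\<forall>s\<in>ran \<Gamma>. wf_s s \<and> lc_s [] s) \<and> wf_m \<tau> \<and> lc_m [] \<tau>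
         \<and> fp decl \<Gamma> (apps (Sym (Fn f)) ps) \<tau>
         \<and> (\<forall>i. ilc [] (\<theta> i))
         \<and> subm J (isub_m \<theta> \<tau>) \<rho>
         \<and> (\<forall>x\<in>tfv (apps (Sym (Fn f)) ps). \<exists>n \<rho>x is.
               \<Gamma> x = Some (Forall n \<rho>x)
             \<and> fresh_names n (fv_s (Forall n \<rho>x)) is
             \<and> sized_typ decl J Map.empty (\<sigma> x) (isub_m \<theta> (open_names is \<rho>x)))"
proof -
  obtain N \<Gamma> \<tau> \<theta> where M: "footprint_match decl J \<sigma> (apps (Sym (Fn f)) ps) \<rho> N \<Gamma> \<tau> \<theta>"
    using footprint_match_exists[OF J_mono decl_ok refl pats _ typed finite.emptyI] lin
    by (auto simp: linear_def)
  then have "\<forall>s\<in>ran \<Gamma>. wf_s s \<and> lc_s [] s"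
    unfolding footprint_match_def ran_def matched_binding_def by blast
  moreover have "\<forall>x\<in>tfv (apps (Sym (Fn f)) ps). \<exists>n \<rho>x is. \<Gamma> x = Some (Forall n \<rho>x)
      \<and> fresh_names n (fv_s (Forall n \<rho>x)) is
      \<and> sized_typ decl J Map.empty (\<sigma> x) (isub_m \<theta> (open_names is \<rho>x))"
    using footprint_match_binding[OF M] by blast
  ultimately show ?thesis
    using M unfolding footprint_match_def closed_isub_def by blast
qed

end
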